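(* Let $\langle \mathscr{A} \mid \mathscr{R} \rangle$ be a $C(4)$ equivalence presentation. Then the monoid presented is left cancellative if and only if $\mathscr{R}$ contains no relation of the form $(ar, as)$ where $a \in \mathscr{A}$ and $r, s \in \mathscr{A}^*$ with $r \neq s$.
   Context: A monoid presentation $\langle \mathscr{A} \mid \mathscr{R} \rangle$ consists of an alphabet $\mathscr{A}$ and a set $\mathscr{R} \subseteq \mathscr{A}^* \times \mathscr{A}^*$ of relations; the monoid presented is $\mathscr{A}^*$ modulo the smallest congruence containing $\mathscr{R}$. A relation word is a word occurring as one side of a relation. A piece is a word which occurs as a factor of two distinct relation words, or in two different (possibly overlapping) positions within one relation word; the empty word is always a piece. The presentation is $C(n)$ if no relation word can be written as a product of strictly fewer than $n$ pieces. It is an equivalence presentation if $\mathscr{R}$ is an equivalence relation on the set of relation words (reflexive on relation words, symmetric and transitive). *)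

theory Defs
  imports Main
begin

text \<open>A monoid presentation over the alphabet given by the type 'a: a set R of
pairs of words (lists). The monoid presented is the free monoid modulo the
smallest congruence containing R.\<close>

inductive pres_cong :: "('a list \<times> 'a list) set \<Rightarrow> 'a list \<Rightarrow> 'a list \<Rightarrow> bool"
  for R :: "('a list \<times> 'a list) set" where
  base: "(u, v) \<in> R \<Longrightarrow> pres_cong R u v"
| refl: "pres_cong R u u"
| sym: "pres_cong R u v \<Longrightarrow> pres_cong R v u"
| trans: "pres_cong R u v \<Longrightarrow> pres_cong R v w \<Longrightarrow> pres_cong R u w"
| left: "pres_cong R u v \<Longrightarrow> pres_cong R (x @ u) (x @ v)"
| right: "pres_cong R u v \<Longrightarrow> pres_cong R (u @ x) (v @ x)"

definition left_cancellative_pres :: "('a list \<times> 'a list) set \<Rightarrow> bool" where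
  "left_cancellative_pres R \<longleftrightarrow>
     (\<forall>u v w. pres_cong R (u @ v) (u @ w) \<longrightarrow> pres_cong R v w)"

definition rel_words :: "('a list \<times> 'a list) set \<Rightarrow> 'a list set" where
  "rel_words R = {l. \<exists>r. (l, r) \<in> R} \<union> {r. \<exists>l. (l, r) \<in> R}"

definition is_factor :: "'a list \<Rightarrow> 'a list \<Rightarrow> bool" where
  "is_factor p w \<longleftrightarrow> (\<exists>x y. w = x @ p @ y)"

definition is_piece :: "('a list \<times> 'a list) set \<Rightarrow> 'a list \<Rightarrow> bool" where
  "is_piece R p \<longleftrightarrow> p = [] \<or>
     (\<exists>w1 \<in> rel_words R. \<exists>w2 \<in> rel_words R. w1 \<noteq> w2 \<and> is_factor p w1 \<and> is_factor p w2) \<or>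
     (\<exists>w \<in> rel_words R. \<exists>x y x' y'. w = x @ p @ y \<and> w = x' @ p @ y' \<and> length x \<noteq> length x')"

definition small_overlap_C :: "nat \<Rightarrow> ('a list \<times> 'a list) set \<Rightarrow> bool" where
  "small_overlap_C n R \<longleftrightarrow>
     (\<forall>w \<in> rel_words R. \<not> (\<exists>ps. length ps < n \<and> concat ps = w \<and> (\<forall>p \<in> set ps. is_piece R p)))"

definition equivalence_presentation :: "('a list \<times> 'a list) set \<Rightarrow> bool" where
  "equivalence_presentation R \<longleftrightarrow> equiv (rel_words R) R"

end

theory Submission
  imports Defs
begin

text \<open>Necessity: if \<open>(a r, a s) \<in> R\<close> with \<open>r \<noteq> s\<close>, left cancellation would give \<open>r = s\<close> in the
monoid, so some relation word would occur in \<open>r\<close> and hence properly inside the relation word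
\<open>a r\<close>, which C(4) forbids.

Sufficiency: by induction on \<open>N\<close>, a derivation from \<open>a u\<close> to \<open>a v\<close> in \<open>N\<close> steps yields one from
\<open>u\<close> to \<open>v\<close> in at most \<open>N\<close> steps. Only a derivation whose first step rewrites a relation word \<open>l\<close>
at the front needs thought. Write each relation word as \<open>W = X Y Z\<close> with \<open>X\<close>, \<open>Z\<close> its longest
piece prefix and suffix, so that \<open>X Y\<close> is no piece. By C(4) no relation word occurrence other than
\<open>W\<close> itself meets the block \<open>X Y\<close> at the front, so every word of the derivation has the form
\<open>X' Y' t'\<close> for relation words \<open>W'\<close> equivalent to \<open>l\<close>, and the tail evolves independently of the
front except when the whole front word is rewritten. As \<open>W'\<close> and \<open>l\<close> start with the same letter
\<open>a\<close>, the hypothesis forces \<open>W' = l\<close>, and the evolution of the tail, with the prefix \<open>Z\<close> cancelled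
by the induction hypothesis, yields the required derivation from \<open>u\<close> to \<open>v\<close>.\<close>

lemma is_piece_Nil [simp]: "is_piece R []"
  by (simp add: is_piece_def)

lemma append_eq_append_longer:
  assumes "x @ w = a @ t" "length a \<le> length x"
  shows "\<exists>x'. x = a @ x' \<and> x' @ w = t"
proof -
  obtain us where "x = a @ us \<and> us @ w = t \<or> x @ us = a \<and> w = us @ t"
    using assms(1) append_eq_append_conv2 by metis
  then show ?thesis
    using assms(2) by auto
qed

lemma rel_wordsI1: "(l, r) \<in> R \<Longrightarrow> l \<in> rel_words R"
  and rel_wordsI2: "(l, r) \<in> R \<Longrightarrow> r \<in> rel_words R"
  by (auto simp: rel_words_def)

lemma is_piece_common_factor:
  assumes "w1 \<in> rel_words R" "w2 \<in> rel_words R" "w1 = x1 @ p @ y1" "w2 = x2 @ p @ y2"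
    and "w1 \<noteq> w2 \<or> length x1 \<noteq> length x2"
  shows "is_piece R p"
  using assms unfolding is_piece_def is_factor_def by metis

lemma is_piece_factor:
  assumes "is_piece R (a @ p @ b)"
  shows "is_piece R p"
  using assms[unfolded is_piece_def is_factor_def]
proof (elim disjE bexE exE conjE)
  fix w1 w2 x1 y1 x2 y2
  assume "w1 \<in> rel_words R" "w2 \<in> rel_words R" "w1 \<noteq> w2"
    "w1 = x1 @ (a @ p @ b) @ y1" "w2 = x2 @ (a @ p @ b) @ y2"
  then show "is_piece R p"
    using is_piece_common_factor[of w1 R w2 "x1 @ a" p "b @ y1" "x2 @ a" "b @ y2"] by simp
next
  fix w x y x' y'
  assume "w \<in> rel_words R" "w = x @ (a @ p @ b) @ y" "w = x' @ (a @ p @ b) @ y'"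
    "length x \<noteq> length x'"
  then show "is_piece R p"
    using is_piece_common_factor[of w R w "x @ a" p "b @ y" "x' @ a" "b @ y'"] by simp
qed simp

definition rstep :: "('a list \<times> 'a list) set \<Rightarrow> 'a list \<Rightarrow> 'a list \<Rightarrow> bool" where
  "rstep R u v \<longleftrightarrow> (\<exists>x l r y. (l, r) \<in> R \<and> u = x @ l @ y \<and> v = x @ r @ y)"

lemma rstep_append_context: "rstep R u v \<Longrightarrow> rstep R (p @ u @ q) (p @ v @ q)"
  unfolding rstep_def by (metis append.assoc)

lemma relpowp_rstep_append_context:
  "(rstep R ^^ k) u v \<Longrightarrow> (rstep R ^^ k) (p @ u @ q) (p @ v @ q)"
proof (induction k arbitrary: v)
  case (Suc k)
  then obtain w where "(rstep R ^^ k) u w" "rstep R w v"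
    by auto
  then show ?case
    using Suc.IH rstep_append_context by fastforce
qed simp

lemma relpowp_rstep_prepend: "(rstep R ^^ k) u v \<Longrightarrow> (rstep R ^^ k) (p @ u) (p @ v)"
  using relpowp_rstep_append_context[where q = "[]"] by simp

lemma rtranclp_rstep_append_context:
  "(rstep R)\<^sup>*\<^sup>* u v \<Longrightarrow> (rstep R)\<^sup>*\<^sup>* (p @ u @ q) (p @ v @ q)"
  by (metis relpowp_rstep_append_context rtranclp_power)

lemma pres_cong_iff_rtranclp_rstep:
  assumes "sym R"
  shows "pres_cong R u v \<longleftrightarrow> (rstep R)\<^sup>*\<^sup>* u v"
proof
  have rstep_sym: "symp (rstep R)"
    using assms unfolding rstep_def symp_def sym_def by blast
  show "(rstep R)\<^sup>*\<^sup>* u v" if "pres_cong R u v"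
    using that
  proof (induction rule: pres_cong.induct)
    case (base u v)
    then have "rstep R u v"
      unfolding rstep_def by (metis append_Nil append_Nil2)
    then show ?case by simp
  next
    case (sym u v)
    then show ?case
      using rstep_sym by (simp add: symp_rtranclp sympD)
  next
    case (left u v x)
    then show ?case
      using rtranclp_rstep_append_context[where q = "[]"] by simp
  next
    case (right u v x)
    then show ?case
      using rtranclp_rstep_append_context[where p = "[]"] by simp
  qed auto
  show "pres_cong R u v" if "(rstep R)\<^sup>*\<^sup>* u v"
    using that
  proof (induction rule: rtranclp_induct)
    case (step w v)
    then obtain x l r y where "(l, r) \<in> R" "w = x @ l @ y" "v = x @ r @ y"
      unfolding rstep_def by blast
    then have "pres_cong R w v"
      by (metis pres_cong.base pres_cong.left pres_cong.right)
    then show ?case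
      using step.IH pres_cong.trans by blast
  qed (rule pres_cong.refl)
qed

lemma rtranclp_rstep_contains_rel_word:
  assumes "(rstep R)\<^sup>*\<^sup>* u v" "u \<noteq> v"
  shows "\<exists>x l y. l \<in> rel_words R \<and> u = x @ l @ y"
  using assms by (cases rule: converse_rtranclpE) (auto simp: rstep_def intro: rel_wordsI1)

definition piece_suffix_start :: "('a list \<times> 'a list) set \<Rightarrow> 'a list \<Rightarrow> nat" where
  "piece_suffix_start R W = (LEAST j. is_piece R (drop j W))"

text \<open>With the paper's decomposition \<open>W = X Y Z\<close> of a relation word into its longest piece
prefix \<open>X\<close>, a middle part \<open>Y\<close> and its longest piece suffix \<open>Z\<close>, \<open>head_part R W\<close> is
\<open>X Y\<close> and \<open>tail_piece R W\<close> is \<open>Z\<close>.\<close>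

abbreviation head_part :: "('a list \<times> 'a list) set \<Rightarrow> 'a list \<Rightarrow> 'a list" where
  "head_part R W \<equiv> take (piece_suffix_start R W) W"

abbreviation tail_piece :: "('a list \<times> 'a list) set \<Rightarrow> 'a list \<Rightarrow> 'a list" where
  "tail_piece R W \<equiv> drop (piece_suffix_start R W) W"

lemma tail_piece_is_piece: "is_piece R (tail_piece R W)"
  unfolding piece_suffix_start_def by (rule LeastI[of _ "length W"]) simp

lemma piece_suffix_start_least: "is_piece R (drop j W) \<Longrightarrow> piece_suffix_start R W \<le> j"
  unfolding piece_suffix_start_def by (rule Least_le)

lemma piece_suffix_start_le_length: "piece_suffix_start R W \<le> length W"
  by (rule piece_suffix_start_least) simp

lemma min_length_piece_suffix_start [simp]:
  "min (length W) (piece_suffix_start R W) = piece_suffix_start R W"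
  using piece_suffix_start_le_length[of R W] by simp

locale C4_presentation =
  fixes R :: "('a list \<times> 'a list) set"
  assumes C4: "small_overlap_C 4 R"
begin

lemma rel_word_not_short_product:
  "w \<in> rel_words R \<Longrightarrow> concat ps = w \<Longrightarrow> length ps < 4 \<Longrightarrow> \<forall>p \<in> set ps. is_piece R p \<Longrightarrow>
    False"
  using C4 unfolding small_overlap_C_def by blast

lemma rel_word_not_piece: "w \<in> rel_words R \<Longrightarrow> \<not> is_piece R w"
  using rel_word_not_short_product[of w "[w]"] by auto

lemma rel_word_not_two_pieces: "p @ q \<in> rel_words R \<Longrightarrow> is_piece R p \<Longrightarrow> \<not> is_piece R q"
  using rel_word_not_short_product[of "p @ q" "[p, q]"] by auto

lemma rel_word_in_rel_word:
  assumes "w \<in> rel_words R" "w' \<in> rel_words R" "w = x @ w' @ y"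
  shows "x = [] \<and> y = []"
proof (rule ccontr)
  assume nontrivial: "\<not> (x = [] \<and> y = [])"
  have "w \<noteq> w'"
  proof
    assume "w = w'"
    moreover have "length w = length x + length w' + length y"
      using assms(3) by simp
    ultimately show False
      using nontrivial by simp
  qed
  then have "is_piece R w'"
    using is_piece_common_factor[of w R w' x w' y "[]" "[]"] assms by simp
  then show False
    using rel_word_not_piece assms(2) by blast
qed

lemma head_part_not_piece: "W \<in> rel_words R \<Longrightarrow> \<not> is_piece R (head_part R W)"
  using rel_word_not_two_pieces[of "head_part R W" "tail_piece R W"] tail_piece_is_piece[of R W]
  by auto

lemma piece_suffix_start_pos: "W \<in> rel_words R \<Longrightarrow> 0 < piece_suffix_start R W"
  using rel_word_not_piece tail_piece_is_piece[of R W] by (auto intro: gr0I)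

lemma head_part_nonempty: "W \<in> rel_words R \<Longrightarrow> head_part R W \<noteq> []"
  using piece_suffix_start_pos[of W] by (metis length_take min_length_piece_suffix_start list.size(3) less_irrefl)

text \<open>As \<open>head_part R V\<close> is no piece, \<open>v\<close> cannot extend beyond it; so \<open>v\<close> is a prefix of \<open>V\<close>
and, being a proper suffix of \<open>l\<close>, a piece.\<close>

lemma suffix_overlapping_head_is_piece:
  assumes V: "V \<in> rel_words R" and l: "l \<in> rel_words R"
    and "l = u @ v" "u \<noteq> []" "v @ y = head_part R V @ t"
  shows "is_piece R v"
proof -
  obtain us where "v = head_part R V @ us \<and> us @ y = t \<or> v @ us = head_part R V \<and> y = us @ t"
    using assms(5) append_eq_append_conv2 by metis
  then show ?thesis
  proof
    assume "v = head_part R V @ us \<and> us @ y = t"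
    then have "is_piece R (head_part R V)"
      using is_piece_common_factor[OF V l, of "[]" _ "tail_piece R V" u us] assms(3,4) by simp
    then show ?thesis
      using head_part_not_piece[OF V] by blast
  next
    assume "v @ us = head_part R V \<and> y = us @ t"
    then have "V = [] @ v @ (us @ tail_piece R V)"
      by (metis append.assoc append_take_drop_id self_append_conv2)
    then show ?thesis
      using is_piece_common_factor[OF V l, of "[]" v _ u "[]"] assms(3,4) by simp
  qed
qed

end

text \<open>Under C(4) the front \<open>W\<close> is the only relation word occurrence in a clean word that
meets \<open>head_part R W\<close>, and rewriting any other occurrence keeps the word clean; the rule
\<open>chain\<close> records a rewrite that straddles the end of a prefix of \<open>tail_piece R W\<close>.\<close>

inductive clean :: "('a list \<times> 'a list) set \<Rightarrow> 'a list \<Rightarrow> 'a list \<Rightarrow> bool" for R where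
  whole: "W \<in> rel_words R \<Longrightarrow> clean R W (W @ s)"
| chain: "W \<in> rel_words R \<Longrightarrow> clean R V t \<Longrightarrow> Z1 @ Z2 = tail_piece R W \<Longrightarrow>
    clean R W (head_part R W @ Z1 @ t)"

lemma clean_rel_word: "clean R W z \<Longrightarrow> W \<in> rel_words R"
  by (induction rule: clean.induct) auto

lemma clean_head_part: "clean R W z \<Longrightarrow> \<exists>t. z = head_part R W @ t"
proof (induction rule: clean.induct)
  case (whole W s)
  have "W @ s = head_part R W @ tail_piece R W @ s"
    by simp
  then show ?case by blast
qed auto

context C4_presentation
begin

lemma clean_redex_at_front:
  assumes "clean R W (l @ y)" and l: "l \<in> rel_words R"
  shows "l = W"
proof -
  have W: "W \<in> rel_words R"
    using clean_rel_word assms(1) by blast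
  obtain t where "l @ y = head_part R W @ t"
    using clean_head_part assms(1) by blast
  then obtain us where
    "l = head_part R W @ us \<and> us @ y = t \<or> l @ us = head_part R W \<and> y = us @ t"
    using append_eq_append_conv2 by metis
  then show ?thesis
  proof
    assume "l @ us = head_part R W \<and> y = us @ t"
    then have "W = [] @ l @ (us @ tail_piece R W)"
      by (metis append.assoc append_take_drop_id self_append_conv2)
    then show ?thesis
      using rel_word_in_rel_word[OF W l, of "[]" "us @ tail_piece R W"] by simp
  next
    assume "l = head_part R W @ us \<and> us @ y = t"
    show ?thesis
    proof (rule ccontr)
      assume "l \<noteq> W"
      then have "is_piece R (head_part R W)"
        using \<open>l = head_part R W @ us \<and> us @ y = t\<close>
          is_piece_common_factor[OF W l, of "[]" _ "tail_piece R W" "[]" us] by simp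
      then show False
        using head_part_not_piece[OF W] by blast
    qed
  qed
qed

lemma redex_meeting_head_part:
  assumes W: "W \<in> rel_words R" and l: "l \<in> rel_words R"
    and "x @ l @ y = head_part R W @ t" "x \<noteq> []" "length x < piece_suffix_start R W"
  shows "\<exists>us us2. x @ us = head_part R W \<and> l = us @ us2 \<and> us2 @ y = t"
proof -
  obtain us where
    "x = head_part R W @ us \<and> us @ l @ y = t \<or> x @ us = head_part R W \<and> l @ y = us @ t"
    using assms(3) append_eq_append_conv2 by metis
  then have x_us: "x @ us = head_part R W" and "l @ y = us @ t"
    using assms(5) by auto
  then obtain us2 where "l = us @ us2 \<and> us2 @ y = t \<or> l @ us2 = us \<and> y = us2 @ t"
    using append_eq_append_conv2 by metis
  moreover have "\<not> l @ us2 = us"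
  proof
    assume "l @ us2 = us"
    then have "W = x @ l @ (us2 @ tail_piece R W)"
      using x_us by (metis append.assoc append_take_drop_id)
    then show False
      using rel_word_in_rel_word[OF W l] assms(4) by blast
  qed
  ultimately show ?thesis
    using x_us by blast
qed

lemma whole_redex_not_in_head_part:
  assumes W: "W \<in> rel_words R" and l: "l \<in> rel_words R"
    and eq: "x @ l @ y = W @ s" and "x \<noteq> []"
  shows "piece_suffix_start R W \<le> length x"
proof (rule ccontr)
  assume "\<not> ?thesis"
  then have short: "length x < piece_suffix_start R W"
    by simp
  have "x @ l @ y = head_part R W @ tail_piece R W @ s"
    using eq by simp
  then obtain us us2 where x_us: "x @ us = head_part R W" and l_us: "l = us @ us2"
    and "us2 @ y = tail_piece R W @ s"
    using redex_meeting_head_part[OF W l _ assms(4) short] by blast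
  then obtain v where "us2 = tail_piece R W @ v \<or> us2 @ v = tail_piece R W"
    using append_eq_append_conv2 by metis
  then show False
  proof
    assume "us2 = tail_piece R W @ v"
    have W_x: "W = x @ (us @ tail_piece R W) @ []"
      using x_us by (metis append.assoc append_take_drop_id append_Nil2)
    then have "is_piece R (us @ tail_piece R W)"
      using is_piece_common_factor[OF W l W_x, of "[]" v] l_us \<open>us2 = _\<close> assms(4) by simp
    moreover have "drop (length x) W = us @ tail_piece R W"
      using W_x by (metis append_Nil2 append_eq_conv_conj)
    ultimately show False
      using piece_suffix_start_least[of R "length x" W] short by simp
  next
    assume "us2 @ v = tail_piece R W"
    then have "W = x @ l @ v"
      using x_us l_us by (metis append.assoc append_take_drop_id)
    then show False
      using rel_word_in_rel_word[OF W l] assms(4) by blast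
  qed
qed

lemma chain_redex_not_in_head_part:
  assumes W: "W \<in> rel_words R" and V: "clean R V t" and Z: "Z1 @ Z2 = tail_piece R W"
    and l: "l \<in> rel_words R" and eq: "x @ l @ y = head_part R W @ Z1 @ t" and "x \<noteq> []"
  shows "piece_suffix_start R W \<le> length x"
proof (rule ccontr)
  assume "\<not> ?thesis"
  then have short: "length x < piece_suffix_start R W"
    by simp
  obtain us us2 where x_us: "x @ us = head_part R W" and l_us: "l = us @ us2"
    and "us2 @ y = Z1 @ t"
    using redex_meeting_head_part[OF W l eq assms(6) short] by blast
  then obtain v where "us2 = Z1 @ v \<and> v @ y = t \<or> us2 @ v = Z1"
    using append_eq_append_conv2 by metis
  then show False
  proof
    assume v: "us2 = Z1 @ v \<and> v @ y = t"
    obtain rest where "t = head_part R V @ rest"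
      using clean_head_part V by blast
    moreover have "us \<noteq> []"
      using x_us short by auto
    ultimately have "is_piece R v"
      using suffix_overlapping_head_is_piece[OF clean_rel_word[OF V] l, of "us @ Z1" v y rest]
        l_us v by simp
    moreover have W_x: "W = x @ (us @ Z1) @ Z2"
      using x_us Z by (metis append.assoc append_take_drop_id)
    then have "is_piece R (us @ Z1)"
      using is_piece_common_factor[OF W l W_x, of "[]" v] l_us v assms(6) by simp
    ultimately show False
      using rel_word_not_two_pieces[of "us @ Z1" v] l l_us v by simp
  next
    assume "us2 @ v = Z1"
    then have "W = x @ l @ (v @ Z2)"
      using x_us l_us Z by (metis append.assoc append_take_drop_id)
    then show False
      using rel_word_in_rel_word[OF W l] assms(6) by blast
  qed
qed

lemma clean_redex_not_in_head_part:
  assumes "clean R W (x @ l @ y)" "l \<in> rel_words R" "x \<noteq> []"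
  shows "piece_suffix_start R W \<le> length x"
  using assms(1)
proof cases
  case (whole s)
  then show ?thesis
    using whole_redex_not_in_head_part assms(2,3) by blast
next
  case (chain V t Z1 Z2)
  then show ?thesis
    using chain_redex_not_in_head_part assms(2,3) by blast
qed

lemma chain_redex_in_clean_suffix:
  assumes W: "W \<in> rel_words R" and V: "clean R V t" and Z: "Z1 @ Z2 = tail_piece R W"
    and eq: "head_part R W @ Z1 @ t = x @ l @ y" and l: "l \<in> rel_words R"
    and beyond: "piece_suffix_start R W \<le> length x"
  shows "\<exists>x'. x = head_part R W @ Z1 @ x'"
proof (rule ccontr)
  assume no_x': "\<not> ?thesis"
  obtain x' where x: "x = head_part R W @ x'" and "x' @ l @ y = Z1 @ t"
    using append_eq_append_longer[of x "l @ y" "head_part R W" "Z1 @ t"] eq beyond by auto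
  then obtain us where Z1_us: "x' @ us = Z1" and "l @ y = us @ t"
    using no_x' append_eq_append_conv2[of x'] by auto
  then obtain v where "l = us @ v \<and> v @ y = t \<or> l @ v = us"
    using append_eq_append_conv2 by metis
  then show False
  proof
    assume l_v: "l = us @ v \<and> v @ y = t"
    have "us \<noteq> []"
      using Z1_us no_x' x by auto
    obtain rest where "t = head_part R V @ rest"
      using clean_head_part V by blast
    then have "is_piece R v"
      using suffix_overlapping_head_is_piece[OF clean_rel_word[OF V] l, of us v y rest]
        l_v \<open>us \<noteq> []\<close> by simp
    moreover have "is_piece R us"
      using is_piece_factor[of R x' us Z2] tail_piece_is_piece[of R W] Z Z1_us
      by (metis append.assoc)
    ultimately show False
      using rel_word_not_two_pieces[of us v] l l_v by simp
  next
    assume "l @ v = us"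
    then have "W = (head_part R W @ x') @ l @ (v @ Z2)"
      using Z Z1_us by (metis append.assoc append_take_drop_id)
    then show False
      using rel_word_in_rel_word[OF W l] head_part_nonempty[OF W] by blast
  qed
qed

lemma clean_rewrite:
  assumes "clean R W z" "z = x @ l @ y" "(l, r) \<in> R" "piece_suffix_start R W \<le> length x"
  shows "clean R W (x @ r @ y)"
  using assms
proof (induction arbitrary: x y rule: clean.induct)
  case (whole W s)
  obtain x' where x: "x = head_part R W @ x'" and "x' @ l @ y = tail_piece R W @ s"
    using append_eq_append_longer[of x "l @ y" "head_part R W" "tail_piece R W @ s"] whole
    by (metis append.assoc append_take_drop_id min_length_piece_suffix_start length_take)
  then obtain us where "x' = tail_piece R W @ us \<or> x' @ us = tail_piece R W"
    using append_eq_append_conv2 by metis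
  then show ?case
  proof
    assume "x' = tail_piece R W @ us"
    then have "x @ r @ y = W @ us @ r @ y"
      using x by (metis append.assoc append_take_drop_id)
    then show ?case
      using clean.whole[OF whole(1)] by simp
  next
    assume "x' @ us = tail_piece R W"
    then show ?case
      using clean.chain[OF whole(1) clean.whole[OF rel_wordsI2[OF whole(3)], of y]] x by simp
  qed
next
  case (chain W V t Z1 Z2)
  obtain x' where x: "x = head_part R W @ Z1 @ x'"
    using chain_redex_in_clean_suffix[OF chain(1-3)] chain(5-7) rel_wordsI1 by metis
  then have t: "t = x' @ l @ y"
    using chain(5) by simp
  have "\<exists>V'. clean R V' (x' @ r @ y)"
  proof (cases "x' = []")
    case True
    then show ?thesis
      using clean.whole rel_wordsI2[OF chain(6)] by auto
  next
    case False
    then show ?thesis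
      using chain.IH t chain(6) clean_redex_not_in_head_part[of V x' l y] chain(2) rel_wordsI1
      by blast
  qed
  then show ?case
    using clean.chain[OF chain(1) _ chain(3)] x by auto
qed

lemma clean_rstep_cases:
  assumes clean: "clean R W (head_part R W @ t)" and step: "rstep R (head_part R W @ t) z"
  obtains (front) r y where "(W, r) \<in> R" "t = tail_piece R W @ y" "z = r @ y"
    | (tail) t1 where "rstep R t t1" "z = head_part R W @ t1" "clean R W z"
proof -
  obtain x l r y where lr: "(l, r) \<in> R" and eq: "head_part R W @ t = x @ l @ y"
    and z: "z = x @ r @ y"
    using step unfolding rstep_def by blast
  show thesis
  proof (cases "x = []")
    case True
    then have "l = W"
      using clean_redex_at_front clean eq rel_wordsI1[OF lr] by simp
    then have "head_part R W @ t = head_part R W @ tail_piece R W @ y"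
      unfolding eq using True by (simp only: append_take_drop_id append.assoc[symmetric] append_Nil)
    then show thesis
      using front lr True \<open>l = W\<close> z by simp
  next
    case False
    then have beyond: "piece_suffix_start R W \<le> length x"
      using clean_redex_not_in_head_part clean eq rel_wordsI1[OF lr] by metis
    then obtain x' where x: "x = head_part R W @ x'" and t: "t = x' @ l @ y"
      using append_eq_append_longer[of x "l @ y" "head_part R W" t] eq by auto
    have "clean R W z"
      using clean_rewrite[OF clean eq lr beyond] z by simp
    moreover have "rstep R t (x' @ r @ y)"
      unfolding rstep_def using lr t by blast
    ultimately show thesis
      using tail z x by simp
  qed
qed

end

text \<open>The bound \<open>N\<close> is the parameter of the induction proving left cancellativity; that
cancellation never lengthens a derivation is what lets the induction go through.\<close>

definition prefix_cancellable :: "('a list \<times> 'a list) set \<Rightarrow> nat \<Rightarrow> bool" where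
  "prefix_cancellable R N \<longleftrightarrow>
     (\<forall>k<N. \<forall>p u v. (rstep R ^^ k) (p @ u) (p @ v) \<longrightarrow> (\<exists>k'\<le>k. (rstep R ^^ k') u v))"

lemma prefix_cancellable_mono: "prefix_cancellable R N \<Longrightarrow> M \<le> N \<Longrightarrow> prefix_cancellable R M"
  unfolding prefix_cancellable_def by auto

lemma prefix_cancellable_Suc:
  assumes "prefix_cancellable R N"
    and letter: "\<And>a u v. (rstep R ^^ N) (a # u) (a # v) \<Longrightarrow> \<exists>k\<le>N. (rstep R ^^ k) u v"
  shows "prefix_cancellable R (Suc N)"
  unfolding prefix_cancellable_def
proof (intro allI impI)
  fix k p u v
  assume "k < Suc N" "(rstep R ^^ k) (p @ u) (p @ v)"
  then show "\<exists>k'\<le>k. (rstep R ^^ k') u v"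
  proof (induction p arbitrary: k)
    case (Cons a p)
    have "\<exists>k1\<le>k. (rstep R ^^ k1) (p @ u) (p @ v)"
    proof (cases "k = N")
      case True
      then show ?thesis
        using letter Cons.prems(2) by simp
    next
      case False
      then show ?thesis
        using assms(1) Cons.prems unfolding prefix_cancellable_def
        by (metis append_Cons append_Nil less_Suc_eq)
    qed
    then obtain k1 where "k1 \<le> k" "(rstep R ^^ k1) (p @ u) (p @ v)"
      by blast
    then show ?case
      using Cons.IH[of k1] Cons.prems(1) by (meson le_less_trans le_trans)
  qed auto
qed

text \<open>\<open>tail_trace R W t W' t' m\<close> records how, in an \<open>m\<close>-step derivation from
\<open>head_part R W @ t\<close> to \<open>head_part R W' @ t'\<close>, the tail \<open>t\<close> becomes \<open>t'\<close>: either the front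
relation word is never rewritten, or \<open>t\<close> first reaches the form \<open>tail_piece R W @ s\<close>, the front
is rewritten (at least once, hence the strict bound) and the part \<open>s\<close> behind the front evolves
independently.\<close>

definition tail_trace ::
  "('a list \<times> 'a list) set \<Rightarrow> 'a list \<Rightarrow> 'a list \<Rightarrow> 'a list \<Rightarrow> 'a list \<Rightarrow> nat \<Rightarrow> bool" where
  "tail_trace R W t W' t' m \<longleftrightarrow>
     (W' = W \<and> (\<exists>k\<le>m. (rstep R ^^ k) t t')) \<or>
     (\<exists>s s' k1 k2 k3. k1 + k2 + k3 < m \<and> (rstep R ^^ k1) t (tail_piece R W @ s) \<and>
        (rstep R ^^ k2) s s' \<and> (rstep R ^^ k3) (tail_piece R W' @ s') t')"

lemma tail_trace_refl: "tail_trace R W t W t 0"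
  unfolding tail_trace_def by auto

lemma tail_trace_tail_step:
  assumes "rstep R t t1" "tail_trace R W t1 W' t' m"
  shows "tail_trace R W t W' t' (Suc m)"
  using assms(2)[unfolded tail_trace_def]
proof (elim disjE exE conjE)
  fix k
  assume "W' = W" "k \<le> m" "(rstep R ^^ k) t1 t'"
  then show ?thesis
    unfolding tail_trace_def using relpowp_Suc_I2[of "rstep R", OF assms(1)] by (metis Suc_le_mono)
next
  fix s s' k1 k2 k3
  assume "k1 + k2 + k3 < m" "(rstep R ^^ k1) t1 (tail_piece R W @ s)"
    "(rstep R ^^ k2) s s'" "(rstep R ^^ k3) (tail_piece R W' @ s') t'"
  then show ?thesis
    unfolding tail_trace_def using relpowp_Suc_I2[of "rstep R", OF assms(1)]
    by (metis add_Suc Suc_mono)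
qed

lemma tail_trace_head_step:
  assumes "prefix_cancellable R m" "tail_trace R V (tail_piece R V @ y) W' t' m"
  shows "tail_trace R W (tail_piece R W @ y) W' t' (Suc m)"
  using assms(2)[unfolded tail_trace_def]
proof (elim disjE exE conjE)
  fix k
  assume "k \<le> m" "(rstep R ^^ k) (tail_piece R V @ y) t'" "W' = V"
  then have "0 + 0 + k < Suc m \<and> (rstep R ^^ 0) (tail_piece R W @ y) (tail_piece R W @ y) \<and>
      (rstep R ^^ 0) y y \<and> (rstep R ^^ k) (tail_piece R W' @ y) t'"
    by simp
  then show ?thesis
    unfolding tail_trace_def by blast
next
  fix s s' k1 k2 k3
  assume k: "k1 + k2 + k3 < m" and "(rstep R ^^ k1) (tail_piece R V @ y) (tail_piece R V @ s)"
    and s: "(rstep R ^^ k2) s s'" and t': "(rstep R ^^ k3) (tail_piece R W' @ s') t'"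
  then obtain k1' where "k1' \<le> k1" "(rstep R ^^ k1') y s"
    using assms(1) unfolding prefix_cancellable_def by (meson add_lessD1)
  then have "0 + (k1' + k2) + k3 < Suc m \<and>
      (rstep R ^^ 0) (tail_piece R W @ y) (tail_piece R W @ y) \<and> (rstep R ^^ (k1' + k2)) y s'"
    using k s by (simp add: relpowp_trans)
  then show ?thesis
    unfolding tail_trace_def using t' by blast
qed

lemma tail_trace_same_word:
  assumes "prefix_cancellable R N" "tail_trace R W (tail_piece R W @ y) W t' N"
  shows "\<exists>k\<le>N. (rstep R ^^ k) (tail_piece R W @ y) t'"
  using assms(2) unfolding tail_trace_def
proof (elim disjE exE conjE)
  fix s s' k1 k2 k3
  assume k: "k1 + k2 + k3 < N" and "(rstep R ^^ k1) (tail_piece R W @ y) (tail_piece R W @ s)"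
    and s: "(rstep R ^^ k2) s s'" and t': "(rstep R ^^ k3) (tail_piece R W @ s') t'"
  then obtain k1' where "k1' \<le> k1" "(rstep R ^^ k1') y s"
    using assms(1) unfolding prefix_cancellable_def by (meson add_lessD1)
  then have "(rstep R ^^ (k1' + k2)) (tail_piece R W @ y) (tail_piece R W @ s')"
    using s relpowp_rstep_prepend by (metis relpowp_trans)
  then have "(rstep R ^^ (k1' + k2 + k3)) (tail_piece R W @ y) t'"
    using t' by (rule relpowp_trans)
  then show ?thesis
    using k \<open>k1' \<le> k1\<close> by (metis add_le_mono1 le_trans less_or_eq_imp_le)
qed blast

locale C4_equivalence_presentation = C4_presentation +
  assumes equivalence: "equivalence_presentation R"
begin

lemma sym_R: "sym R"
  using equivalence unfolding equivalence_presentation_def equiv_def by blast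

lemma clean_relpowp_rstep:
  assumes "prefix_cancellable R m" "clean R W (head_part R W @ t)"
    and "(rstep R ^^ m) (head_part R W @ t) z"
  shows "\<exists>W' t'. (W, W') \<in> R \<and> z = head_part R W' @ t' \<and> tail_trace R W t W' t' m"
  using assms
proof (induction m arbitrary: W t)
  case 0
  have "(W, W) \<in> R"
    using equivalence clean_rel_word[OF "0.prems"(2)]
    unfolding equivalence_presentation_def equiv_def refl_on_def by blast
  moreover have "z = head_part R W @ t"
    using "0.prems"(3) by simp
  ultimately show ?case
    using tail_trace_refl by blast
next
  case (Suc m)
  have cancellable: "prefix_cancellable R m"
    using prefix_cancellable_mono[OF Suc.prems(1)] by simp
  obtain z1 where step: "rstep R (head_part R W @ t) z1" and z1: "(rstep R ^^ m) z1 z"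
    using Suc.prems(3) relpowp_Suc_D2 by metis
  from Suc.prems(2) step show ?case
  proof (cases rule: clean_rstep_cases)
    case (front r y)
    have r_y: "head_part R r @ tail_piece R r @ y = r @ y"
      by (simp only: append_take_drop_id append.assoc[symmetric])
    have "clean R r (head_part R r @ tail_piece R r @ y)"
      and "(rstep R ^^ m) (head_part R r @ tail_piece R r @ y) z"
      unfolding r_y using z1 front clean.whole[OF rel_wordsI2[OF front(1)]] by simp_all
    then obtain W' t' where "(r, W') \<in> R" "z = head_part R W' @ t'"
      and "tail_trace R r (tail_piece R r @ y) W' t' m"
      using Suc.IH[OF cancellable] by blast
    moreover have "(W, W') \<in> R"
      using front(1) \<open>(r, W') \<in> R\<close> equivalence
      unfolding equivalence_presentation_def equiv_def trans_def by blast
    ultimately show ?thesis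
      using tail_trace_head_step[OF cancellable] front(2) by blast
  next
    case (tail t1)
    then obtain W' t' where "(W, W') \<in> R" "z = head_part R W' @ t'"
      and "tail_trace R W t1 W' t' m"
      using Suc.IH[OF cancellable] z1 by blast
    then show ?thesis
      using tail_trace_tail_step[OF tail(1)] by blast
  qed
qed

lemma cancel_letter_at_front:
  assumes no_common: "\<forall>a r s. (a # r, a # s) \<in> R \<longrightarrow> r = s"
    and cancellable: "prefix_cancellable R N" and l: "l \<in> rel_words R"
    and front: "a # u = l @ y" and steps: "(rstep R ^^ N) (l @ y) (a # v)"
  shows "\<exists>k\<le>N. (rstep R ^^ k) u v"
proof -
  have l_y: "l @ y = head_part R l @ tail_piece R l @ y"
    by (simp only: append_take_drop_id append.assoc[symmetric])
  have "clean R l (head_part R l @ tail_piece R l @ y)"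
    using clean.whole[OF l] unfolding l_y[symmetric] .
  then obtain W' t' where lW': "(l, W') \<in> R" and v: "a # v = head_part R W' @ t'"
    and trace: "tail_trace R l (tail_piece R l @ y) W' t' N"
    using clean_relpowp_rstep[OF cancellable] steps unfolding l_y by blast
  obtain P where P: "head_part R l = a # P"
    using front head_part_nonempty[OF l] unfolding l_y by (cases "head_part R l") auto
  obtain P' where P': "head_part R W' = a # P'"
    using v head_part_nonempty[OF rel_wordsI2[OF lW']] by (cases "head_part R W'") auto
  have "W' = head_part R W' @ tail_piece R W'" "l = head_part R l @ tail_piece R l"
    by simp_all
  then have "(a # P @ tail_piece R l, a # P' @ tail_piece R W') \<in> R"
    using lW' unfolding P P' by simp
  then have "P @ tail_piece R l = P' @ tail_piece R W'"
    using no_common by blast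
  then have "W' = l"
    using \<open>W' = _\<close> \<open>l = _\<close> unfolding P P' by (metis append_Cons)
  then have "P' = P"
    using P P' by simp
  then have u: "u = P @ tail_piece R l @ y" and "v = P @ t'"
    using front v P' \<open>W' = l\<close> unfolding l_y P by simp_all
  moreover obtain k where "k \<le> N" "(rstep R ^^ k) (tail_piece R l @ y) t'"
    using tail_trace_same_word[OF cancellable] trace \<open>W' = l\<close> by blast
  ultimately show ?thesis
    using relpowp_rstep_prepend by blast
qed

lemma cancel_letter:
  assumes no_common: "\<forall>a r s. (a # r, a # s) \<in> R \<longrightarrow> r = s"
    and cancellable: "prefix_cancellable R N" and steps: "(rstep R ^^ N) (a # u) (a # v)"
  shows "\<exists>k\<le>N. (rstep R ^^ k) u v"
proof (cases N)
  case 0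
  then show ?thesis
    using steps by auto
next
  case (Suc m)
  obtain z1 where "rstep R (a # u) z1" and z1: "(rstep R ^^ m) z1 (a # v)"
    using steps Suc relpowp_Suc_D2 by metis
  then obtain x l r y where lr: "(l, r) \<in> R" and u: "a # u = x @ l @ y" and z1_eq: "z1 = x @ r @ y"
    unfolding rstep_def by blast
  show ?thesis
  proof (cases x)
    case Nil
    then show ?thesis
      using cancel_letter_at_front[OF no_common cancellable rel_wordsI1[OF lr]] u steps by simp
  next
    case (Cons b x')
    then have "(rstep R ^^ m) ([a] @ x' @ r @ y) ([a] @ v)"
      using u z1 z1_eq by simp
    then obtain k where "k \<le> m" "(rstep R ^^ k) (x' @ r @ y) v"
      using cancellable Suc unfolding prefix_cancellable_def by blast
    moreover have "rstep R u (x' @ r @ y)"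
      unfolding rstep_def using lr u Cons by auto
    ultimately show ?thesis
      using Suc relpowp_Suc_I2[of "rstep R"] by (metis Suc_le_mono)
  qed
qed

lemma prefix_cancellable_all:
  assumes no_common: "\<forall>a r s. (a # r, a # s) \<in> R \<longrightarrow> r = s"
  shows "prefix_cancellable R N"
proof (induction N)
  case 0
  then show ?case
    unfolding prefix_cancellable_def by simp
next
  case (Suc N)
  then show ?case
    using prefix_cancellable_Suc cancel_letter[OF no_common Suc.IH] by blast
qed


lemma left_cancellative_common_first_letter:
  assumes "left_cancellative_pres R" "(a # r, a # s) \<in> R"
  shows "r = s"
proof (rule ccontr)
  assume "r \<noteq> s"
  have "pres_cong R ([a] @ r) ([a] @ s)"
    using pres_cong.base[OF assms(2)] by simp
  then have "pres_cong R r s"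
    using assms(1) unfolding left_cancellative_pres_def by blast
  then obtain x l y where "l \<in> rel_words R" "r = x @ l @ y"
    using rtranclp_rstep_contains_rel_word \<open>r \<noteq> s\<close> pres_cong_iff_rtranclp_rstep[OF sym_R] by blast
  then show False
    using rel_word_in_rel_word[OF rel_wordsI1[OF assms(2)], of l "a # x" y] by simp
qed

lemma left_cancellative_if_no_common_first_letter:
  assumes no_common: "\<forall>a r s. (a # r, a # s) \<in> R \<longrightarrow> r = s"
  shows "left_cancellative_pres R"
  unfolding left_cancellative_pres_def pres_cong_iff_rtranclp_rstep[OF sym_R]
proof (intro allI impI)
  fix u v w
  assume "(rstep R)\<^sup>*\<^sup>* (u @ v) (u @ w)"
  then obtain n where "(rstep R ^^ n) (u @ v) (u @ w)"
    by (metis rtranclp_power)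
  moreover have "prefix_cancellable R (Suc n)"
    by (rule prefix_cancellable_all[OF no_common])
  ultimately obtain k where "(rstep R ^^ k) v w"
    unfolding prefix_cancellable_def by (meson lessI)
  then show "(rstep R)\<^sup>*\<^sup>* v w"
    by (rule relpowp_imp_rtranclp)
qed

end

theorem theorem5:
  fixes R :: "('a list \<times> 'a list) set"
  assumes "small_overlap_C 4 R"
    and "equivalence_presentation R"
  shows "left_cancellative_pres R \<longleftrightarrow>
           \<not> (\<exists>a r s. (a # r, a # s) \<in> R \<and> r \<noteq> s)"
proof -
  interpret C4_equivalence_presentation R
    using assms by unfold_locales
  show ?thesis
    using left_cancellative_common_first_letter left_cancellative_if_no_common_first_letter
    by blast
qed

end
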